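(* Let $q\in\mathbb{N}$, $q\geq3$, let $n\ge1$ and $a_1,\dots,a_n\in\mathbb{Q}\cap[0,q-1]$, and let $K$ be the attractor of the iterated function system $\{f_i(x)=\frac{x+a_i}{q}\}_{i=1}^n$, i.e. the unique nonempty compact set with $K=\bigcup_{i=1}^n f_i(K)$. Suppose $K$ is nowhere dense in $[0,1]$. Then for every $t\in(0,1)$ that has a universal $q$-adic expansion, $$K-t\subset\mathbb{Q}^c,\qquad K+t\subset\mathbb{Q}^c,\qquad \frac{K}{t}\subset\mathbb{Q}^c.$$ Moreover, for every $t\in(1,\infty)$ such that $1/t$ has a universal $q$-adic expansion, $tK\subset\mathbb{Q}^c$.
   Context: A $q$-adic expansion of $t\in(0,1)$ is a sequence $(t_k)\in\{0,1,\dots,q-1\}^{\mathbb{N}}$ with $t=\sum_{k\geq1}t_k q^{-k}$. Such an expansion is universal if for every $k\geq1$ and every word $x_1\cdots x_k\in\{0,\dots,q-1\}^k$ there is $k_0\in\mathbb{N}$ with $t_{k_0+1}\cdots t_{k_0+k}=x_1\cdots x_k$; $t$ has a universal $q$-adic expansion if some $q$-adic expansion of it is universal. Notation: $K\pm t=\{x\pm t:x\in K\}$, $tK=\{tx:x\in K\setminus\{0\}\}$, $\frac{K}{t}=\{t^{-1}x:x\in K\setminus\{0\}\}$. $\mathbb{Q}^c$ denotes the set of irrational real numbers. *)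

theory Defs
  imports "HOL-Analysis.Analysis"
begin

text \<open>A q-adic expansion of t: digits d 1, d 2, ... (the value d 0 is unused),
  each in {0,...,q-1}, with t = sum over k >= 1 of d k / q^k.\<close>
definition q_adic_expansion :: "nat \<Rightarrow> real \<Rightarrow> (nat \<Rightarrow> nat) \<Rightarrow> bool" where
  "q_adic_expansion q t d \<longleftrightarrow>
     (\<forall>k\<ge>1. d k < q) \<and> (\<lambda>k. real (d (Suc k)) / real q ^ Suc k) sums t"

definition universal_expansion :: "nat \<Rightarrow> (nat \<Rightarrow> nat) \<Rightarrow> bool" where
  "universal_expansion q d \<longleftrightarrow>
     (\<forall>w::nat list. length w \<ge> 1 \<and> set w \<subseteq> {..<q} \<longrightarrow>
        (\<exists>k0. \<forall>j<length w. d (k0 + j + 1) = w ! j))"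

definition has_universal_expansion :: "nat \<Rightarrow> real \<Rightarrow> bool" where
  "has_universal_expansion q t \<longleftrightarrow>
     (\<exists>d. q_adic_expansion q t d \<and> universal_expansion q d)"

end

theory Submission
  imports Defs
begin

text \<open>Let t = s x + r with x \<in> K, s \<noteq> 0 and r rational. Since K is invariant under the
  expanding maps y \<mapsto> q y - a i, for every m there is y \<in> K with q^m x - y \<in> (1/D)\<int>,
  D a common denominator of the a i. So the m-th shift q^m t mod 1 of an expansion of t
  differs from s y by an element of a fixed lattice (1/E)\<int>; these offsets are bounded and
  thus take finitely many values, so all shifts lie in a finite union of affine copies of K,
  a closed nowhere dense set. The shifts of a universal expansion are dense in [0,1].\<close>

definition expansion_tail :: "nat \<Rightarrow> (nat \<Rightarrow> nat) \<Rightarrow> nat \<Rightarrow> real" where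
  "expansion_tail q d m = (\<Sum>k. real (d (m + k + 1)) / real q ^ (k + 1))"

lemma summable_expansion_tail:
  assumes q: "q \<ge> 2" and digits: "\<forall>k\<ge>1. d k < q"
  shows "summable (\<lambda>k. real (d (m + k + 1)) / real q ^ (k + 1))"
proof (rule summable_comparison_test')
  have "summable (\<lambda>k. (1 / real q) ^ k)" using q by (intro summable_geometric) auto
  then show "summable (\<lambda>k. real q * (1 / real q) ^ (k + 1))"
    by (intro summable_mult) (simp add: summable_Suc_iff)
  fix k :: nat
  have "d (m + k + 1) < q" using digits by auto
  then show "norm (real (d (m + k + 1)) / real q ^ (k + 1)) \<le> real q * (1 / real q) ^ (k + 1)"
    using q by (simp add: power_divide divide_right_mono del: power_Suc)
qed

lemma expansion_tail_Suc:
  assumes q: "q \<ge> 2" and digits: "\<forall>k\<ge>1. d k < q"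
  shows "expansion_tail q d m = (real (d (m + 1)) + expansion_tail q d (Suc m)) / real q"
proof -
  let ?f = "\<lambda>k. real (d (m + k + 1)) / real q ^ (k + 1)"
  have "expansion_tail q d m = ?f 0 + (\<Sum>k. ?f (Suc k))"
    unfolding expansion_tail_def using suminf_split_head[OF summable_expansion_tail[OF q digits]] by simp
  also have "(\<Sum>k. ?f (Suc k)) = (\<Sum>k. real (d (Suc m + k + 1)) / real q ^ (k + 1) / real q)"
    by (simp add: field_simps)
  also have "\<dots> = expansion_tail q d (Suc m) / real q"
    unfolding expansion_tail_def by (rule suminf_divide[OF summable_expansion_tail[OF q digits]])
  finally show ?thesis by (simp add: add_divide_distrib)
qed

lemma expansion_tail_nonneg:
  assumes "q \<ge> 2" and "\<forall>k\<ge>1. d k < q"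
  shows "0 \<le> expansion_tail q d m"
  unfolding expansion_tail_def by (rule suminf_nonneg[OF summable_expansion_tail[OF assms]]) simp

lemma expansion_tail_le_1:
  assumes q: "q \<ge> 2" and digits: "\<forall>k\<ge>1. d k < q"
  shows "expansion_tail q d m \<le> 1"
proof -
  have "(\<lambda>k. (real q - 1) / real q * (1 / real q) ^ k) sums ((real q - 1) / real q * (1 / (1 - 1 / real q)))"
    using q by (intro sums_mult geometric_sums) auto
  moreover have "(real q - 1) / real q * (1 / (1 - 1 / real q)) = 1" using q by (simp add: field_simps)
  ultimately have geometric: "(\<lambda>k. (real q - 1) / real q ^ (k + 1)) sums 1"
    by (simp add: power_divide field_simps)
  have "real (d (m + k + 1)) / real q ^ (k + 1) \<le> (real q - 1) / real q ^ (k + 1)" for k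
  proof -
    have "d (m + k + 1) < q" using digits by auto
    then show ?thesis by (simp add: divide_right_mono of_nat_less_iff del: power_Suc)
  qed
  then show ?thesis
    unfolding expansion_tail_def
    by (intro sums_le[OF _ summable_sums[OF summable_expansion_tail[OF q digits]] geometric])
qed

lemma expansion_tail_0:
  assumes "q_adic_expansion q t d"
  shows "expansion_tail q d 0 = t"
  using assms unfolding q_adic_expansion_def expansion_tail_def by (simp add: sums_iff)

lemma power_mult_minus_expansion_tail_Ints:
  assumes q: "q \<ge> 2" and t: "q_adic_expansion q t d"
  shows "real q ^ m * t - expansion_tail q d m \<in> \<int>"
proof (induction m)
  case 0
  then show ?case using expansion_tail_0[OF t] by simp
next
  case (Suc m)
  have digits: "\<forall>k\<ge>1. d k < q" using t by (simp add: q_adic_expansion_def)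
  have "real q ^ Suc m * t - expansion_tail q d (Suc m)
      = real q * (real q ^ m * t - expansion_tail q d m) + real (d (m + 1))"
    using expansion_tail_Suc[OF q digits, of m] q by (simp add: field_simps)
  also have "\<dots> \<in> \<int>" using Suc by (intro Ints_add Ints_mult) auto
  finally show ?case .
qed

lemma expansion_tail_add:
  assumes q: "q \<ge> 2" and digits: "\<forall>k\<ge>1. d k < q"
  shows "expansion_tail q d m
    = (\<Sum>j<L. real (d (m + j + 1)) / real q ^ (j + 1)) + expansion_tail q d (m + L) / real q ^ L"
proof (induction L)
  case (Suc L)
  have "expansion_tail q d (m + L) / real q ^ L
      = real (d (m + L + 1)) / real q ^ (L + 1) + expansion_tail q d (m + Suc L) / real q ^ Suc L"
    using expansion_tail_Suc[OF q digits, of "m + L"] q by (simp add: field_simps)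
  then show ?case using Suc by simp
qed simp

lemma sum_base_digits:
  fixes N q L :: nat
  shows "(\<Sum>i<L. (N div q ^ i mod q) * q ^ i) = N mod q ^ L"
proof (induction L)
  case (Suc L)
  have "N mod q ^ Suc L = q ^ L * (N div q ^ L mod q) + N mod q ^ L"
    using mod_mult2_eq[of N "q ^ L" q] by (simp add: mult.commute)
  then show ?case using Suc by simp
qed simp

lemma sum_leading_base_digits:
  fixes N q L :: nat
  assumes "q > 0" and "N < q ^ L"
  shows "(\<Sum>j<L. real (N div q ^ (L - Suc j) mod q) / real q ^ (j + 1)) = real N / real q ^ L"
proof -
  have "real q ^ L = real q ^ (j + 1) * real q ^ (L - Suc j)" if "j < L" for j
    using that by (metis Suc_eq_plus1 le_add_diff_inverse less_eq_Suc_le power_add)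
  then have "(\<Sum>j<L. real (N div q ^ (L - Suc j) mod q) / real q ^ (j + 1))
      = (\<Sum>j<L. real ((N div q ^ (L - Suc j) mod q) * q ^ (L - Suc j))) / real q ^ L"
    unfolding sum_divide_distrib using assms(1) by (intro sum.cong) auto
  also have "(\<Sum>j<L. real ((N div q ^ (L - Suc j) mod q) * q ^ (L - Suc j)))
      = real (\<Sum>i<L. (N div q ^ i mod q) * q ^ i)"
    by (subst sum.nat_diff_reindex[symmetric, where n = L]) simp
  finally show ?thesis using sum_base_digits[of N q L] assms(2) by simp
qed

lemma universal_expansion_tail_approx:
  assumes q: "q \<ge> 2" and t: "q_adic_expansion q t d" and universal: "universal_expansion q d"
    and y: "0 \<le> y" "y < 1" and L: "L \<ge> 1"
  shows "\<exists>m. \<bar>expansion_tail q d m - y\<bar> \<le> 1 / real q ^ L"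
proof -
  have digits: "\<forall>k\<ge>1. d k < q" using t by (simp add: q_adic_expansion_def)
  have qL: "real q ^ L > 0" using q by simp
  define N where "N = nat \<lfloor>y * real q ^ L\<rfloor>"
  have N: "real N \<le> y * real q ^ L" "y * real q ^ L < real N + 1"
    unfolding N_def using y qL by (simp_all add: of_nat_nat)
  have "y * real q ^ L < real q ^ L" using y qL by simp
  with N(1) have N_less: "N < q ^ L" by (metis le_less_trans of_nat_less_imp_less of_nat_power)
  define w where "w = map (\<lambda>j. N div q ^ (L - Suc j) mod q) [0..<L]"
  have "length w \<ge> 1 \<and> set w \<subseteq> {..<q}" unfolding w_def using L q by auto
  then obtain m where "\<forall>j<length w. d (m + j + 1) = w ! j"
    using universal unfolding universal_expansion_def by blast
  then have "(\<Sum>j<L. real (d (m + j + 1)) / real q ^ (j + 1)) = real N / real q ^ L"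
    using sum_leading_base_digits[of q N L] q N_less by (simp add: w_def)
  then have tail: "expansion_tail q d m = (real N + expansion_tail q d (m + L)) / real q ^ L"
    using expansion_tail_add[OF q digits, of m L] by (simp add: add_divide_distrib)
  have "real N \<le> real N + expansion_tail q d (m + L)" "real N + expansion_tail q d (m + L) \<le> real N + 1"
    using expansion_tail_nonneg[OF q digits] expansion_tail_le_1[OF q digits] by auto
  with N qL have "\<bar>real N + expansion_tail q d (m + L) - y * real q ^ L\<bar> \<le> 1" by linarith
  then have "\<bar>expansion_tail q d m - y\<bar> \<le> 1 / real q ^ L"
    unfolding tail using qL by (simp add: field_simps abs_divide)
  then show ?thesis ..
qed

lemma universal_expansion_tails_dense:
  assumes q: "q \<ge> 2" and "q_adic_expansion q t d" and "universal_expansion q d"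
  shows "{0..<1} \<subseteq> closure (range (expansion_tail q d))"
proof
  fix y :: real assume y: "y \<in> {0..<1}"
  show "y \<in> closure (range (expansion_tail q d))"
    unfolding closure_approachable
  proof (intro allI impI)
    fix \<epsilon> :: real assume "\<epsilon> > 0"
    then obtain L where L: "(1 / real q) ^ L < \<epsilon>"
      using real_arch_pow_inv[of \<epsilon> "1 / real q"] q by auto
    have "(1 / real q) ^ Suc L \<le> (1 / real q) ^ L" using q by (intro power_decreasing) auto
    with L have "1 / real q ^ Suc L < \<epsilon>" by (simp add: power_divide)
    moreover obtain m where "\<bar>expansion_tail q d m - y\<bar> \<le> 1 / real q ^ Suc L"
      using universal_expansion_tail_approx[OF assms, of y "Suc L"] y by auto
    ultimately have "dist (expansion_tail q d m) y < \<epsilon>" by (simp add: dist_real_def)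
    then show "\<exists>z\<in>range (expansion_tail q d). dist z y < \<epsilon>" by blast
  qed
qed

lemma Rats_imp_int_multiple:
  fixes x :: "'a :: field_char_0"
  assumes "x \<in> \<rat>"
  shows "\<exists>v::int. v > 0 \<and> of_int v * x \<in> \<int>"
proof -
  obtain p v where "v > 0" "x = of_int p / of_int v" using assms by (rule Rats_cases')
  then show ?thesis by (intro exI[of _ v]) auto
qed

lemma Rats_common_denominator:
  fixes a :: "'b \<Rightarrow> 'a :: field_char_0"
  assumes "finite I" and "\<forall>i\<in>I. a i \<in> \<rat>"
  shows "\<exists>D::int. D > 0 \<and> (\<forall>i\<in>I. of_int D * a i \<in> \<int>)"
proof -
  have "\<forall>i\<in>I. \<exists>v::int. v > 0 \<and> of_int v * a i \<in> \<int>"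
    using Rats_imp_int_multiple assms(2) by blast
  then obtain v where v: "\<forall>i\<in>I. v i > 0 \<and> of_int (v i) * a i \<in> \<int>"
    by metis
  have "of_int (\<Prod>j\<in>I. v j) * a i \<in> \<int>" if i: "i \<in> I" for i
  proof -
    have "of_int (\<Prod>j\<in>I. v j) * a i = of_int (\<Prod>j\<in>I - {i}. v j) * (of_int (v i) * a i)"
      using prod.remove[OF assms(1) i, of v] by simp
    also have "\<dots> \<in> \<int>" using v i by (metis Ints_mult Ints_of_int)
    finally show ?thesis .
  qed
  moreover have "(\<Prod>j\<in>I. v j) > 0" using v by (intro prod_pos) auto
  ultimately show ?thesis by blast
qed

lemma attractor_power_mult_congruent:
  assumes K: "K = (\<Union>i\<in>I. (\<lambda>x. (x + a i) / real q) ` K)"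
    and D: "\<forall>i\<in>I. of_int D * a i \<in> \<int>" and x: "x \<in> K" and q: "q > 0"
  shows "\<exists>y\<in>K. of_int D * (real q ^ m * x - y) \<in> \<int>"
proof (induction m)
  case 0
  then show ?case using x by (intro bexI[of _ x]) auto
next
  case (Suc m)
  then obtain y where y: "y \<in> K" "of_int D * (real q ^ m * x - y) \<in> \<int>" by blast
  then obtain i y' where i: "i \<in> I" "y' \<in> K" "y = (y' + a i) / real q"
    using K by blast
  have y': "y' = real q * y - a i" using i(3) q by simp
  have "of_int D * (real q ^ Suc m * x - y') = real q * (of_int D * (real q ^ m * x - y)) + of_int D * a i"
    unfolding y' by (simp add: algebra_simps)
  also have "\<dots> \<in> \<int>" using y D i by (intro Ints_add Ints_mult[OF Ints_of_nat]) auto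
  finally show ?case using i(2) by blast
qed

lemma finite_bounded_fractions:
  fixes E :: int and C :: real
  assumes "E > 0"
  shows "finite {e::real. of_int E * e \<in> \<int> \<and> \<bar>e\<bar> \<le> C}"
proof (rule finite_subset)
  let ?B = "\<lceil>of_int E * C\<rceil>"
  show "finite ((\<lambda>j. of_int j / of_int E) ` {-?B..?B})" by simp
  show "{e::real. of_int E * e \<in> \<int> \<and> \<bar>e\<bar> \<le> C} \<subseteq> (\<lambda>j. of_int j / of_int E) ` {-?B..?B}"
  proof
    fix e :: real assume "e \<in> {e. of_int E * e \<in> \<int> \<and> \<bar>e\<bar> \<le> C}"
    then obtain j where j: "of_int E * e = of_int j" and bound: "\<bar>e\<bar> \<le> C" by (auto elim: Ints_cases)
    have "\<bar>of_int j\<bar> \<le> of_int E * C"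
      using bound assms by (simp flip: j add: abs_mult mult_left_mono)
    then have "j \<in> {-?B..?B}" by (simp add: abs_le_iff) linarith
    moreover have "e = of_int j / of_int E" using j assms by (simp add: field_simps)
    ultimately show "e \<in> (\<lambda>j. of_int j / of_int E) ` {-?B..?B}" by blast
  qed
qed

lemma interior_affine_image_empty:
  fixes K :: "real set"
  assumes "s \<noteq> 0" and "interior K = {}"
  shows "interior ((\<lambda>y. s * y + e) ` K) = {}"
proof -
  have "(\<lambda>y. s * y + e) ` K = (+) e ` (*) s ` K" by (auto simp: image_image add.commute)
  moreover have "interior ((*) s ` K) = (*) s ` interior K"
    using assms(1) by (intro interior_injective_linear_image) (auto simp: linear_cmul inj_on_def)
  ultimately show ?thesis using assms(2) by (simp add: interior_translation)
qed

lemma interior_finite_Union_closed_empty: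
  fixes P :: "'b \<Rightarrow> 'a::topological_space set"
  assumes "finite F" and "\<And>e. e \<in> F \<Longrightarrow> closed (P e) \<and> interior (P e) = {}"
  shows "interior (\<Union>e\<in>F. P e) = {}"
  using assms
proof (induction F rule: finite_induct)
  case (insert e F)
  then have "interior ((\<Union>e\<in>F. P e) \<union> P e) = interior (\<Union>e\<in>F. P e)"
    by (intro interior_closed_Un_empty_interior) (auto intro!: closed_UN)
  then show ?case using insert by (simp add: Un_commute)
qed simp

lemma expansion_tail_offset_Ints:
  assumes q: "q \<ge> 2" and t: "q_adic_expansion q (s * x + r) d"
    and K: "K = (\<Union>i\<in>I. (\<lambda>x. (x + a i) / real q) ` K)" and D: "\<forall>i\<in>I. of_int D * a i \<in> \<int>"
    and s: "of_int v * s \<in> \<int>" and r: "of_int w * r \<in> \<int>" and x: "x \<in> K"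
  shows "\<exists>y\<in>K. of_int (D * v * w) * (expansion_tail q d m - s * y) \<in> \<int>"
proof -
  obtain y where y: "y \<in> K" "of_int D * (real q ^ m * x - y) \<in> \<int>"
    using attractor_power_mult_congruent[OF K D x] q by auto
  obtain N where "real q ^ m * (s * x + r) - expansion_tail q d m = of_int N"
    using power_mult_minus_expansion_tail_Ints[OF q t, of m] by (auto elim: Ints_cases)
  then have "of_int (D * v * w) * (expansion_tail q d m - s * y)
      = of_int w * (of_int v * s) * (of_int D * (real q ^ m * x - y))
        + of_int (D * v) * real q ^ m * (of_int w * r) - of_int (D * v * w * N)"
    by (simp add: algebra_simps flip: \<open>_ = of_int N\<close>)
  also have "\<dots> \<in> \<int>"
    using Ints_mult[OF Ints_mult[OF Ints_of_int s] y(2)] Ints_mult[OF Ints_mult[OF Ints_of_int Ints_power[OF Ints_of_nat]] r]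
    by (intro Ints_diff Ints_add Ints_of_int)
  finally show ?thesis using y(1) by blast
qed

lemma not_universal_expansion_rational_affine_attractor:
  assumes q: "q \<ge> 2" and "finite I" and "\<forall>i\<in>I. a i \<in> \<rat>"
    and "compact K" and K: "K = (\<Union>i\<in>I. (\<lambda>x. (x + a i) / real q) ` K)" and "interior K = {}"
    and "s \<in> \<rat>" and "s \<noteq> 0" and "r \<in> \<rat>" and x: "x \<in> K"
  shows "\<not> has_universal_expansion q (s * x + r)"
proof
  assume "has_universal_expansion q (s * x + r)"
  then obtain d where t: "q_adic_expansion q (s * x + r) d" and "universal_expansion q d"
    unfolding has_universal_expansion_def by blast
  have digits: "\<forall>k\<ge>1. d k < q" using t by (simp add: q_adic_expansion_def)
  obtain D where D: "D > 0" "\<forall>i\<in>I. of_int D * a i \<in> \<int>"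
    using Rats_common_denominator assms(2,3) by blast
  obtain v w where v: "v > 0" "of_int v * s \<in> \<int>" and w: "w > 0" "of_int w * r \<in> \<int>"
    using Rats_imp_int_multiple assms(7,9) by metis
  obtain M where M: "\<forall>y\<in>K. \<bar>y\<bar> \<le> M"
    using compact_imp_bounded[OF \<open>compact K\<close>] unfolding bounded_iff by auto
  define F where "F = {e. of_int (D * v * w) * e \<in> \<int> \<and> \<bar>e\<bar> \<le> 1 + \<bar>s\<bar> * M}"
  define S where "S = (\<Union>e\<in>F. (\<lambda>y. s * y + e) ` K)"
  have "finite F" unfolding F_def using D v w by (intro finite_bounded_fractions) simp
  have copies_closed: "closed ((\<lambda>y. s * y + e) ` K)" for e
    by (intro compact_imp_closed compact_continuous_image continuous_intros \<open>compact K\<close>)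
  have "range (expansion_tail q d) \<subseteq> S"
  proof clarify
    fix m
    obtain y where y: "y \<in> K" "of_int (D * v * w) * (expansion_tail q d m - s * y) \<in> \<int>"
      using expansion_tail_offset_Ints[OF q t K D(2) v(2) w(2) x] by blast
    have "\<bar>s * y\<bar> \<le> \<bar>s\<bar> * M" using M y(1) by (simp add: abs_mult mult_left_mono)
    then have "\<bar>expansion_tail q d m - s * y\<bar> \<le> 1 + \<bar>s\<bar> * M"
      using expansion_tail_nonneg[OF q digits, of m] expansion_tail_le_1[OF q digits, of m] by linarith
    with y have "expansion_tail q d m - s * y \<in> F" unfolding F_def by blast
    moreover have "expansion_tail q d m = s * y + (expansion_tail q d m - s * y)" by simp
    ultimately show "expansion_tail q d m \<in> S" unfolding S_def using y(1) by blast
  qed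
  moreover have "closed S" unfolding S_def using \<open>finite F\<close> copies_closed by (intro closed_UN) auto
  ultimately have "{0..<1} \<subseteq> S"
    using universal_expansion_tails_dense[OF q t \<open>universal_expansion q d\<close>] closure_minimal by blast
  then have "{0<..<1} \<subseteq> interior S"
    using interior_mono[of "{0<..<1}" S] by fastforce
  then have "1 / 2 \<in> interior S" by auto
  moreover have "interior S = {}" unfolding S_def
    using \<open>finite F\<close> copies_closed interior_affine_image_empty[OF \<open>s \<noteq> 0\<close> \<open>interior K = {}\<close>]
    by (intro interior_finite_Union_closed_empty) auto
  ultimately show False by simp
qed

theorem theorem5:
  fixes q n :: nat and a :: "nat \<Rightarrow> real" and K :: "real set"
  assumes "q \<ge> 3" and "n \<ge> 1"
    and "\<forall>i\<in>{1..n}. a i \<in> \<rat> \<and> 0 \<le> a i \<and> a i \<le> real q - 1"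
    and "K \<noteq> {}" and "compact K"
    and "K = (\<Union>i\<in>{1..n}. (\<lambda>x. (x + a i) / real q) ` K)"
    and "interior (closure K) = {}"
  shows "(\<forall>t. 0 < t \<and> t < 1 \<and> has_universal_expansion q t \<longrightarrow>
            (\<forall>x\<in>K. x - t \<notin> \<rat>) \<and> (\<forall>x\<in>K. x + t \<notin> \<rat>) \<and>
            (\<forall>x\<in>K - {0}. x / t \<notin> \<rat>)) \<and>
         (\<forall>t. 1 < t \<and> has_universal_expansion q (1 / t) \<longrightarrow>
            (\<forall>x\<in>K - {0}. t * x \<notin> \<rat>))"
proof -
  have "interior K = {}" using assms(7) interior_mono[OF closure_subset[of K]] by blast
  then have not_universal: "\<not> has_universal_expansion q (s * x + r)"
    if "s \<in> \<rat>" "s \<noteq> 0" "r \<in> \<rat>" "x \<in> K" for s r x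
    using not_universal_expansion_rational_affine_attractor[of q "{1..n}" a K s r x] assms(1,3,5,6) that
    by auto
  have affine: "t \<noteq> x - \<rho>" "t \<noteq> \<rho> - x" "\<rho> \<noteq> 0 \<Longrightarrow> t \<noteq> x / \<rho>"
    if "has_universal_expansion q t" "x \<in> K" "\<rho> \<in> \<rat>" for t x \<rho>
    using not_universal[of 1 "-\<rho>" x] not_universal[of "-1" \<rho> x] not_universal[of "1 / \<rho>" 0 x] that
    by auto
  show ?thesis
  proof (intro conjI allI impI ballI notI)
    fix t x assume t: "0 < t \<and> t < 1 \<and> has_universal_expansion q t" and x: "x \<in> K"
    show False if "x - t \<in> \<rat>" using affine(1)[of t x "x - t"] t x that by simp
    show False if "x + t \<in> \<rat>" using affine(2)[of t x "x + t"] t x that by simp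
  next
    fix t x assume t: "0 < t \<and> t < 1 \<and> has_universal_expansion q t" and x: "x \<in> K - {0}"
    show False if "x / t \<in> \<rat>" using affine(3)[of t x "x / t"] t x that by simp
  next
    fix t x assume t: "1 < t \<and> has_universal_expansion q (1 / t)" and x: "x \<in> K - {0}"
    show False if "t * x \<in> \<rat>" using affine(3)[of "1 / t" x "t * x"] t x that by simp
  qed
qed

end
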